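(* Let $G$ be a (fork, banner)-free graph that contains an induced claw. Then either $G$ has a homogeneous set, or there is a vertex $v$ in $G$ such that $G[M(v)]$ is perfect.
   Context: All graphs are finite and simple. For a vertex $v$, $M(v)=V(G)\setminus(N(v)\cup\{v\})$. The claw is $K_{1,3}$. The fork is obtained from $K_{1,3}$ by subdividing one edge once. The banner is the graph on $v_1,\dots,v_5$ where $v_1$ is adjacent to $v_2,v_3,v_4$, $\{v_2,v_3,v_4\}$ is stable, and $v_5$ is adjacent to $v_2,v_3$ but not to $v_1,v_4$ (i.e. a $4$-cycle with a pendant vertex). $G$ is $(H_1,H_2)$-free if it has no induced subgraph isomorphic to $H_1$ or $H_2$. A set $S\subseteq V(G)$ is a homogeneous set if $1<|S|<|V(G)|$ and every vertex outside $S$ is adjacent to all or none of $S$. A graph is perfect if every induced subgraph $H$ satisfies $\chi(H)=\omega(H)$. *)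

theory Defs
  imports Main
begin

definition simple_graph :: "'a set \<Rightarrow> ('a \<Rightarrow> 'a \<Rightarrow> bool) \<Rightarrow> bool" where
  "simple_graph V E \<longleftrightarrow> finite V \<and> (\<forall>x\<in>V. \<forall>y\<in>V. E x y \<longleftrightarrow> E y x) \<and> (\<forall>x\<in>V. \<not> E x x)"

definition contains_induced ::
  "'a set \<Rightarrow> ('a \<Rightarrow> 'a \<Rightarrow> bool) \<Rightarrow> nat \<Rightarrow> (nat \<Rightarrow> nat \<Rightarrow> bool) \<Rightarrow> bool" where
  "contains_induced V E n HE \<longleftrightarrow>
     (\<exists>f. inj_on f {..<n} \<and> f ` {..<n} \<subseteq> V \<and>
          (\<forall>i<n. \<forall>j<n. E (f i) (f j) \<longleftrightarrow> HE i j))"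

definition edges_of :: "(nat \<times> nat) list \<Rightarrow> nat \<Rightarrow> nat \<Rightarrow> bool" where
  "edges_of L i j \<longleftrightarrow> (i, j) \<in> set L \<or> (j, i) \<in> set L"

definition claw_edges :: "nat \<Rightarrow> nat \<Rightarrow> bool" where
  "claw_edges = edges_of [(0,1),(0,2),(0,3)]"

text \<open>Fork: claw with edge 0-3 subdivided by vertex 4.\<close>
definition fork_edges :: "nat \<Rightarrow> nat \<Rightarrow> bool" where
  "fork_edges = edges_of [(0,1),(0,2),(0,4),(4,3)]"

text \<open>Banner on v1..v5 (here 0..4): v1 adjacent to v2,v3,v4; v5 adjacent to v2,v3.\<close>
definition banner_edges :: "nat \<Rightarrow> nat \<Rightarrow> bool" where
  "banner_edges = edges_of [(0,1),(0,2),(0,3),(4,1),(4,2)]"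

definition has_claw where "has_claw V E \<longleftrightarrow> contains_induced V E 4 claw_edges"
definition has_fork where "has_fork V E \<longleftrightarrow> contains_induced V E 5 fork_edges"
definition has_banner where "has_banner V E \<longleftrightarrow> contains_induced V E 5 banner_edges"

definition nonneighbours :: "'a set \<Rightarrow> ('a \<Rightarrow> 'a \<Rightarrow> bool) \<Rightarrow> 'a \<Rightarrow> 'a set" where
  "nonneighbours V E v = {u \<in> V. u \<noteq> v \<and> \<not> E v u}"

definition homogeneous_set :: "'a set \<Rightarrow> ('a \<Rightarrow> 'a \<Rightarrow> bool) \<Rightarrow> 'a set \<Rightarrow> bool" where
  "homogeneous_set V E S \<longleftrightarrow> S \<subseteq> V \<and> 1 < card S \<and> card S < card V \<and>
     (\<forall>x\<in>V - S. (\<forall>s\<in>S. E x s) \<or> (\<forall>s\<in>S. \<not> E x s))"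

definition is_clique :: "('a \<Rightarrow> 'a \<Rightarrow> bool) \<Rightarrow> 'a set \<Rightarrow> bool" where
  "is_clique E C \<longleftrightarrow> (\<forall>x\<in>C. \<forall>y\<in>C. x \<noteq> y \<longrightarrow> E x y)"

definition clique_number :: "'a set \<Rightarrow> ('a \<Rightarrow> 'a \<Rightarrow> bool) \<Rightarrow> nat" where
  "clique_number S E = Max {card C | C. C \<subseteq> S \<and> is_clique E C}"

definition proper_colouring :: "'a set \<Rightarrow> ('a \<Rightarrow> 'a \<Rightarrow> bool) \<Rightarrow> nat \<Rightarrow> ('a \<Rightarrow> nat) \<Rightarrow> bool" where
  "proper_colouring S E k c \<longleftrightarrow> (\<forall>x\<in>S. c x < k) \<and> (\<forall>x\<in>S. \<forall>y\<in>S. E x y \<longrightarrow> c x \<noteq> c y)"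

definition chromatic_number :: "'a set \<Rightarrow> ('a \<Rightarrow> 'a \<Rightarrow> bool) \<Rightarrow> nat" where
  "chromatic_number S E = (LEAST k. \<exists>c. proper_colouring S E k c)"

definition perfect :: "'a set \<Rightarrow> ('a \<Rightarrow> 'a \<Rightarrow> bool) \<Rightarrow> bool" where
  "perfect S E \<longleftrightarrow> (\<forall>T\<subseteq>S. chromatic_number T E = clique_number T E)"

end

theory Submission
  imports Defs
begin

text \<open>Fix an induced claw with centre x and leaves a, b, c. Fork- and banner-freeness force
  every vertex outside the claw that is non-adjacent to its centre to see all or none of the
  leaves. If some other common neighbour of a, b, c is non-adjacent to x, the anticomponent of x
  among the common neighbours of a, b, c is a homogeneous set: a vertex outside it that sees one
  end of a non-edge inside it sees the other end too, since otherwise there is a banner.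
  Otherwise every vertex of M(x) misses a, b, c, and a neighbour of x sees both ends of an
  edge of M(x) or neither, since otherwise there is a fork. Hence a component of G[M(x)]
  with an edge is a homogeneous set, and if there is no such component M(x) is stable,
  so G[M(x)] is perfect.\<close>

definition is_stable :: "('a \<Rightarrow> 'a \<Rightarrow> bool) \<Rightarrow> 'a set \<Rightarrow> bool" where
  "is_stable E S \<longleftrightarrow> (\<forall>x\<in>S. \<forall>y\<in>S. \<not> E x y)"

definition claw :: "('a \<Rightarrow> 'a \<Rightarrow> bool) \<Rightarrow> 'a \<Rightarrow> 'a \<Rightarrow> 'a \<Rightarrow> 'a \<Rightarrow> bool" where
  "claw E x a b c \<longleftrightarrow> distinct [x, a, b, c] \<and> E x a \<and> E x b \<and> E x c \<and>
     \<not> E a b \<and> \<not> E a c \<and> \<not> E b c"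

lemma contains_induced_listI:
  assumes "distinct vs" "set vs \<subseteq> V"
    and "\<forall>i<length vs. \<forall>j<length vs. E (vs ! i) (vs ! j) \<longleftrightarrow> HE i j"
  shows "contains_induced V E (length vs) HE"
  unfolding contains_induced_def
proof (intro exI conjI)
  show "inj_on ((!) vs) {..<length vs}"
    using assms(1) by (simp add: inj_on_def nth_eq_iff_index_eq)
  show "(!) vs ` {..<length vs} \<subseteq> V"
    using assms(2) by (auto dest: nth_mem)
qed (use assms(3) in blast)

lemma has_forkI:
  assumes "simple_graph V E" "{v0, v1, v2, v3, v4} \<subseteq> V" "distinct [v0, v1, v2, v3, v4]"
    and "E v0 v1" "E v0 v2" "E v0 v4" "E v4 v3"
    and "\<not> E v0 v3" "\<not> E v1 v2" "\<not> E v1 v3" "\<not> E v1 v4" "\<not> E v2 v3" "\<not> E v2 v4"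
  shows "has_fork V E"
proof -
  have "contains_induced V E (length [v0, v1, v2, v3, v4]) fork_edges"
    using assms unfolding simple_graph_def
    by (intro contains_induced_listI)
      (auto simp: less_Suc_eq fork_edges_def edges_of_def)
  then show ?thesis by (simp add: has_fork_def eval_nat_numeral)
qed

lemma has_bannerI:
  assumes "simple_graph V E" "{v0, v1, v2, v3, v4} \<subseteq> V" "distinct [v0, v1, v2, v3, v4]"
    and "E v0 v1" "E v0 v2" "E v0 v3" "E v4 v1" "E v4 v2"
    and "\<not> E v0 v4" "\<not> E v1 v2" "\<not> E v1 v3" "\<not> E v2 v3" "\<not> E v3 v4"
  shows "has_banner V E"
proof -
  have "contains_induced V E (length [v0, v1, v2, v3, v4]) banner_edges"
    using assms unfolding simple_graph_def
    by (intro contains_induced_listI)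
      (auto simp: less_Suc_eq banner_edges_def edges_of_def)
  then show ?thesis by (simp add: has_banner_def eval_nat_numeral)
qed

lemma has_clawE:
  assumes "has_claw V E"
  obtains x a b c where "{x, a, b, c} \<subseteq> V" "claw E x a b c"
proof -
  obtain f where f: "inj_on f {..<4}" "f ` {..<4} \<subseteq> V"
    "\<forall>i<4. \<forall>j<4. E (f i) (f j) \<longleftrightarrow> claw_edges i j"
    using assms unfolding has_claw_def contains_induced_def by blast
  have "claw E (f 0) (f 1) (f 2) (f 3)"
    using f(1,3) unfolding claw_def claw_edges_def edges_of_def inj_on_def
    by (auto simp: numeral_eq_Suc)
  moreover have "{f 0, f 1, f 2, f 3} \<subseteq> V" using f(2) by auto
  ultimately show thesis using that by blast
qed

lemma homogeneous_setI_reachable: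
  assumes "finite V" "x \<in> V" "R x t" "t \<noteq> x" "v \<in> V" "\<not> R\<^sup>*\<^sup>* x v"
    and closed: "\<And>u w. R u w \<Longrightarrow> w \<in> V"
    and propagate: "\<And>z u w. z \<in> V \<Longrightarrow> \<not> R\<^sup>*\<^sup>* x z \<Longrightarrow> R\<^sup>*\<^sup>* x u \<Longrightarrow> R u w \<Longrightarrow> E z u \<longleftrightarrow> E z w"
  shows "homogeneous_set V E {w. R\<^sup>*\<^sup>* x w}"
proof -
  let ?C = "{w. R\<^sup>*\<^sup>* x w}"
  have CV: "?C \<subseteq> V"
    using \<open>x \<in> V\<close> by (auto elim: rtranclp.cases dest: closed)
  have "finite ?C" using CV \<open>finite V\<close> finite_subset by blast
  then have "card {x, t} \<le> card ?C"
    using \<open>R x t\<close> by (intro card_mono) auto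
  then have "1 < card ?C" using \<open>t \<noteq> x\<close> by simp
  moreover have "card ?C < card V"
    using CV assms(1,5,6) by (intro psubset_card_mono) auto
  moreover have "E z w \<longleftrightarrow> E z x" if "z \<in> V" "\<not> R\<^sup>*\<^sup>* x z" "R\<^sup>*\<^sup>* x w" for z w
    using that(3)
  proof (induction rule: rtranclp_induct)
    case (step u w)
    then show ?case using propagate[OF that(1,2)] by blast
  qed simp
  ultimately show ?thesis
    unfolding homogeneous_set_def using CV by blast
qed

lemma chromatic_number_stable:
  assumes "is_stable E T"
  shows "chromatic_number T E = (if T = {} then 0 else 1)"
proof (cases "T = {}")
  case True
  then show ?thesis
    unfolding chromatic_number_def proper_colouring_def by (simp add: Least_eq_0)
next
  case False
  have "(LEAST k. \<exists>c. proper_colouring T E k c) = 1"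
  proof (rule Least_equality)
    show "\<exists>c. proper_colouring T E 1 c"
      using assms by (auto simp: proper_colouring_def is_stable_def)
    show "1 \<le> k" if "\<exists>c. proper_colouring T E k c" for k
      using that False by (auto simp: proper_colouring_def)
  qed
  then show ?thesis using False by (simp add: chromatic_number_def)
qed

lemma clique_number_stable:
  assumes "finite T" "is_stable E T"
  shows "clique_number T E = (if T = {} then 0 else 1)"
proof -
  let ?sizes = "{card C | C. C \<subseteq> T \<and> is_clique E C}"
  have small: "card C \<le> 1" if "C \<subseteq> T" "is_clique E C" for C
  proof -
    have "finite C" using that(1) assms(1) finite_subset by blast
    moreover have "\<forall>u\<in>C. \<forall>w\<in>C. u = w"
      using that assms(2) unfolding is_clique_def is_stable_def by blast
    ultimately show ?thesis using card_le_Suc0_iff_eq by auto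
  qed
  have empty: "0 \<in> ?sizes"
    by (auto simp: is_clique_def intro!: exI[of _ "{}"])
  show ?thesis
  proof (cases "T = {}")
    case True
    then have "?sizes = {0}" using empty by auto
    then show ?thesis using True by (simp add: clique_number_def)
  next
    case False
    then obtain t where "t \<in> T" by blast
    then have "1 \<in> ?sizes"
      by (auto simp: is_clique_def intro!: exI[of _ "{t}"])
    moreover have "?sizes \<subseteq> {0, 1}" using small by force
    ultimately have "?sizes = {0, 1}" using empty by blast
    then show ?thesis using False by (simp add: clique_number_def)
  qed
qed

lemma perfect_if_stable:
  assumes "finite S" "is_stable E S"
  shows "perfect S E"
  unfolding perfect_def
proof (intro allI impI)
  fix T assume "T \<subseteq> S"
  then have "finite T" "is_stable E T"
    using assms finite_subset unfolding is_stable_def by blast+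
  then show "chromatic_number T E = clique_number T E"
    by (simp add: chromatic_number_stable clique_number_stable)
qed

locale fork_banner_free =
  fixes V :: "'a set" and E :: "'a \<Rightarrow> 'a \<Rightarrow> bool"
  assumes simple: "simple_graph V E"
    and fork_free: "\<not> has_fork V E"
    and banner_free: "\<not> has_banner V E"
begin

lemma finite_vertices: "finite V"
  using simple by (simp add: simple_graph_def)

lemma adj_sym: "x \<in> V \<Longrightarrow> y \<in> V \<Longrightarrow> E x y \<longleftrightarrow> E y x"
  using simple by (simp add: simple_graph_def)

lemma adj_irrefl: "x \<in> V \<Longrightarrow> \<not> E x x"
  using simple by (simp add: simple_graph_def)

lemma claw_nonneighbour_sees_all_or_no_leaves:
  assumes "{t, a, b, c, y} \<subseteq> V" "claw E t a b c" "y \<notin> {t, a, b, c}" "\<not> E t y"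
  shows "(E y a \<and> E y b \<and> E y c) \<or> (\<not> E y a \<and> \<not> E y b \<and> \<not> E y c)"
proof -
  have sym: "E a y \<longleftrightarrow> E y a" "E b y \<longleftrightarrow> E y b" "E c y \<longleftrightarrow> E y c"
    "\<not> E b a" "\<not> E c a" "\<not> E c b" "\<not> E y t"
    using assms adj_sym by (auto simp: claw_def)
  have no_one: False
    if "E y p" "\<not> E y q" "\<not> E y r" "distinct [p, q, r]" "{p, q, r} \<subseteq> {a, b, c}" for p q r
    using has_forkI[OF simple, of t q r y p] fork_free that assms sym
    by (auto simp: claw_def)
  have no_two: False
    if "E y p" "E y q" "\<not> E y r" "distinct [p, q, r]" "{p, q, r} \<subseteq> {a, b, c}" for p q r
    using has_bannerI[OF simple, of t p q r y] banner_free that assms sym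
    by (auto simp: claw_def)
  show ?thesis
    using no_one[of a b c] no_one[of b a c] no_one[of c a b]
      no_two[of a b c] no_two[of a c b] no_two[of b c a] assms(2)
    by (auto simp: claw_def)
qed

lemma nonadjacent_claw_centres_share_neighbours:
  assumes "{u, w, a, b, c, y} \<subseteq> V" "claw E u a b c" "claw E w a b c" "\<not> E u w"
    and "y \<notin> {a, b, c}" "\<not> (E y a \<and> E y b \<and> E y c)" "E y u"
  shows "E y w"
proof (rule ccontr)
  assume "\<not> E y w"
  moreover have "y \<noteq> w" using assms(1,4,7) adj_sym by auto
  ultimately have "\<not> E y a \<and> \<not> E y b \<and> \<not> E y c"
    using claw_nonneighbour_sees_all_or_no_leaves[of w a b c y] assms adj_sym by auto
  then have "has_banner V E"
    using has_bannerI[OF simple, of u a b y w] \<open>\<not> E y w\<close> assms adj_sym adj_irrefl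
    by (auto simp: claw_def)
  then show False using banner_free by blast
qed

lemma nonneighbour_edge_propagates:
  assumes "{x, a, b, c, u, w, z} \<subseteq> V" "claw E x a b c"
    and "\<not> E x u" "\<not> E x w" "E u w" "\<forall>p\<in>{a, b, c}. \<not> E u p \<and> \<not> E w p"
    and "E x z" "E z u"
  shows "E z w"
proof (rule ccontr)
  assume "\<not> E z w"
  have misses_two: False
    if "{p, q} \<subseteq> {a, b, c}" "p \<noteq> q" "\<not> E z p" "\<not> E z q" for p q
    using has_forkI[OF simple, of x p q u z] fork_free that assms adj_sym adj_irrefl
    by (auto simp: claw_def)
  have sees_two: False
    if "{p, q} \<subseteq> {a, b, c}" "p \<noteq> q" "E z p" "E z q" for p q
    using has_forkI[OF simple, of z p q w u] fork_free that assms \<open>\<not> E z w\<close> adj_sym adj_irrefl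
    by (auto simp: claw_def)
  show False
    using misses_two[of a b] misses_two[of a c] misses_two[of b c]
      sees_two[of a b] sees_two[of a c] sees_two[of b c] assms(2)
    by (auto simp: claw_def)
qed

lemma homogeneous_set_if_nonadjacent_claw_centres:
  assumes "{x, a, b, c, t} \<subseteq> V" "claw E x a b c"
    and "E t a" "E t b" "E t c" "t \<noteq> x" "\<not> E x t"
  shows "\<exists>S. homogeneous_set V E S"
proof -
  define T where "T = {u \<in> V. E u a \<and> E u b \<and> E u c}"
  define R where "R u w \<longleftrightarrow> u \<in> T \<and> w \<in> T \<and> u \<noteq> w \<and> \<not> E u w" for u w
  have centre_claw: "claw E u a b c" if "u \<in> T" for u
    using that assms(1,2) adj_irrefl unfolding T_def claw_def by auto
  have "x \<in> T" "t \<in> T" using assms unfolding T_def claw_def by auto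
  have reach_T: "w \<in> T" if "R\<^sup>*\<^sup>* x w" for w
    using that by (induction rule: rtranclp_induct) (auto simp: R_def \<open>x \<in> T\<close>)
  have "homogeneous_set V E {w. R\<^sup>*\<^sup>* x w}"
  proof (rule homogeneous_setI_reachable)
    show "R x t" using \<open>x \<in> T\<close> \<open>t \<in> T\<close> assms(6,7) by (auto simp: R_def)
    show "\<not> R\<^sup>*\<^sup>* x a" using reach_T assms(1) adj_irrefl by (auto simp: T_def)
    show "w \<in> V" if "R u w" for u w using that by (simp add: R_def T_def)
  next
    fix z u w assume z: "z \<in> V" "\<not> R\<^sup>*\<^sup>* x z" and "R\<^sup>*\<^sup>* x u" "R u w"
    then have "R\<^sup>*\<^sup>* x w" by simp
    have "u \<in> T" "w \<in> T" "\<not> E u w" "\<not> E w u"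
      using \<open>R u w\<close> adj_sym by (auto simp: R_def T_def)
    show "E z u \<longleftrightarrow> E z w"
    proof (cases "z \<in> T")
      case True
      have "E z v" if "R\<^sup>*\<^sup>* x v" for v
      proof (rule ccontr)
        assume "\<not> E z v"
        then have "R v z" using that reach_T True z adj_sym by (auto simp: R_def T_def)
        then show False using that z(2) rtranclp.rtrancl_into_rtrancl by metis
      qed
      then show ?thesis using \<open>R\<^sup>*\<^sup>* x u\<close> \<open>R\<^sup>*\<^sup>* x w\<close> by blast
    next
      case False
      show ?thesis
      proof (cases "z \<in> {a, b, c}")
        case True
        then show ?thesis using \<open>u \<in> T\<close> \<open>w \<in> T\<close> assms(1) adj_sym by (auto simp: T_def)
      next
        case outside: False
        have "\<not> (E z a \<and> E z b \<and> E z c)" using False z(1) by (simp add: T_def)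
        then show ?thesis
          using nonadjacent_claw_centres_share_neighbours[of u w a b c z]
            nonadjacent_claw_centres_share_neighbours[of w u a b c z]
            centre_claw \<open>u \<in> T\<close> \<open>w \<in> T\<close> \<open>\<not> E u w\<close> \<open>\<not> E w u\<close> outside z(1) assms(1)
          by (auto simp: T_def)
      qed
    qed
  qed (use finite_vertices assms(1,6) in auto)
  then show ?thesis by blast
qed

lemma nonneighbour_of_dominating_centre_misses_leaves:
  assumes "{x, a, b, c} \<subseteq> V" "claw E x a b c"
    and dominating: "\<And>t. t \<in> V \<Longrightarrow> t \<noteq> x \<Longrightarrow> E t a \<Longrightarrow> E t b \<Longrightarrow> E t c \<Longrightarrow> E x t"
    and "y \<in> nonneighbours V E x"
  shows "\<forall>p\<in>{a, b, c}. \<not> E y p"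
proof -
  have y: "y \<in> V" "y \<noteq> x" "\<not> E x y"
    using assms(4) unfolding nonneighbours_def by simp_all
  then have "y \<notin> {x, a, b, c}" using assms(2) by (auto simp: claw_def)
  moreover have "\<not> (E y a \<and> E y b \<and> E y c)" using dominating y by blast
  ultimately show ?thesis
    using claw_nonneighbour_sees_all_or_no_leaves[of x a b c y] y assms(1,2) by auto
qed

lemma homogeneous_set_or_stable_nonneighbours:
  assumes "{x, a, b, c} \<subseteq> V" "claw E x a b c"
    and dominating: "\<And>t. t \<in> V \<Longrightarrow> t \<noteq> x \<Longrightarrow> E t a \<Longrightarrow> E t b \<Longrightarrow> E t c \<Longrightarrow> E x t"
  shows "(\<exists>S. homogeneous_set V E S) \<or> is_stable E (nonneighbours V E x)"
proof (cases "is_stable E (nonneighbours V E x)")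
  case False
  define M where "M = nonneighbours V E x"
  obtain y1 y2 where "y1 \<in> M" "y2 \<in> M" "E y1 y2"
    using False unfolding M_def is_stable_def by blast
  have M_props: "y \<in> V" "y \<noteq> x" "\<not> E x y" if "y \<in> M" for y
    using that by (simp_all add: M_def nonneighbours_def)
  have M_misses_leaves: "\<forall>p\<in>{a, b, c}. \<not> E y p" if "y \<in> M" for y
    using nonneighbour_of_dominating_centre_misses_leaves[OF assms] that
    unfolding M_def by blast
  define R where "R u w \<longleftrightarrow> u \<in> M \<and> w \<in> M \<and> E u w" for u w
  have reach_M: "w \<in> M" if "R\<^sup>*\<^sup>* y1 w" for w
    using that by (induction rule: rtranclp_induct) (auto simp: R_def \<open>y1 \<in> M\<close>)
  have "homogeneous_set V E {w. R\<^sup>*\<^sup>* y1 w}"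
  proof (rule homogeneous_setI_reachable)
    show "R y1 y2" using \<open>y1 \<in> M\<close> \<open>y2 \<in> M\<close> \<open>E y1 y2\<close> by (simp add: R_def)
    show "y2 \<noteq> y1" using \<open>E y1 y2\<close> M_props(1)[OF \<open>y1 \<in> M\<close>] adj_irrefl by auto
    show "\<not> R\<^sup>*\<^sup>* y1 x" using reach_M M_props by blast
    show "w \<in> V" if "R u w" for u w using that M_props by (simp add: R_def)
  next
    fix z u w assume z: "z \<in> V" "\<not> R\<^sup>*\<^sup>* y1 z" and "R\<^sup>*\<^sup>* y1 u" "R u w"
    then have "R\<^sup>*\<^sup>* y1 w" by simp
    have "u \<in> M" "w \<in> M" "E u w" "E w u"
      using \<open>R u w\<close> M_props adj_sym by (auto simp: R_def)
    show "E z u \<longleftrightarrow> E z w"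
    proof (cases "z \<in> M \<or> z = x")
      case True
      have "\<not> E z v" if "R\<^sup>*\<^sup>* y1 v" for v
      proof
        assume "E z v"
        then have "z \<noteq> x" using reach_M[OF that] M_props assms(1) adj_sym by auto
        then have "R v z" using \<open>E z v\<close> that reach_M True z M_props adj_sym by (auto simp: R_def)
        then show False using that z(2) rtranclp.rtrancl_into_rtrancl by metis
      qed
      then show ?thesis using \<open>R\<^sup>*\<^sup>* y1 u\<close> \<open>R\<^sup>*\<^sup>* y1 w\<close> by blast
    next
      case False
      then have "E x z" using z(1) by (auto simp: M_def nonneighbours_def)
      have "{x, a, b, c, u, w, z} \<subseteq> V" "{x, a, b, c, w, u, z} \<subseteq> V"
        using assms(1) z(1) M_props \<open>u \<in> M\<close> \<open>w \<in> M\<close> by blast+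
      moreover have "\<forall>p\<in>{a, b, c}. \<not> E u p \<and> \<not> E w p" "\<forall>p\<in>{a, b, c}. \<not> E w p \<and> \<not> E u p"
        using M_misses_leaves \<open>u \<in> M\<close> \<open>w \<in> M\<close> by blast+
      moreover have "\<not> E x u" "\<not> E x w" using M_props \<open>u \<in> M\<close> \<open>w \<in> M\<close> by blast+
      ultimately show ?thesis
        using nonneighbour_edge_propagates[OF _ assms(2) _ _ _ _ \<open>E x z\<close>] \<open>E u w\<close> \<open>E w u\<close>
        by metis
    qed
  qed (use finite_vertices assms(1) M_props \<open>y1 \<in> M\<close> in auto)
  then show ?thesis by blast
qed simp

end

theorem theorem3p12:
  fixes V :: "'a set" and E :: "'a \<Rightarrow> 'a \<Rightarrow> bool"
  assumes "simple_graph V E"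
    and "\<not> has_fork V E" and "\<not> has_banner V E"
    and "has_claw V E"
  shows "(\<exists>S. homogeneous_set V E S) \<or> (\<exists>v\<in>V. perfect (nonneighbours V E v) E)"
proof -
  interpret fork_banner_free V E
    using assms(1-3) by unfold_locales
  obtain x a b c where claw: "{x, a, b, c} \<subseteq> V" "claw E x a b c"
    using has_clawE[OF assms(4)] .
  show ?thesis
  proof (cases "\<exists>t\<in>V. t \<noteq> x \<and> E t a \<and> E t b \<and> E t c \<and> \<not> E x t")
    case True
    then show ?thesis
      using homogeneous_set_if_nonadjacent_claw_centres claw by blast
  next
    case False
    then have "(\<exists>S. homogeneous_set V E S) \<or> is_stable E (nonneighbours V E x)"
      using homogeneous_set_or_stable_nonneighbours[OF claw] by blast
    moreover have "finite (nonneighbours V E x)"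
      using finite_vertices by (simp add: nonneighbours_def)
    ultimately show ?thesis
      using perfect_if_stable claw(1) by blast
  qed
qed

end
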